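(* Every almost periodic sequence has the universal joint repetition property. That is, if $a:\mathbb{Z}\to\mathbb{C}$ is almost periodic, then for every metric space $\tilde\Omega$ and every sequence $\{\tilde\omega_n\}_{n\ge0}$ in $\tilde\Omega$ with the repetition property, the sequences $\{a(n)\}_{n\ge0}$ (in $\mathbb{C}$) and $\{\tilde\omega_n\}_{n\ge0}$ have the joint repetition property.
   Context: $a:\mathbb{Z}\to\mathbb{C}$ is almost periodic if its set of translates $\{a(\cdot+m):m\in\mathbb{Z}\}$ is relatively compact in $\ell^\infty(\mathbb{Z})$. $\mathbb{Z}_+=\{1,2,\ldots\}$. A sequence $\{\omega_n\}_{n\ge0}$ in a metric space $\Omega$ has the repetition property if for every $\varepsilon>0$ and $r \in \mathbb{Z}_+$ there exists $q \in \mathbb{Z}_+$ such that $\mathrm{dist}(\omega_n,\omega_{n+q}) < \varepsilon$ for $n = 0,1,\ldots, rq$. A family of sequences (possibly in different metric spaces) has the joint repetition property if each of them has the repetition property and, for each finite subfamily and each $\varepsilon>0$, $r\in\mathbb{Z}_+$, a single $q\in\mathbb{Z}_+$ can be chosen that works simultaneously for all sequences in the subfamily. A sequence $\{\omega_n\}$ in a metric space has the universal joint repetition property if it has the joint repetition property with every sequence (in any metric space) that has the repetition property. $\mathbb{C}$ carries its usual metric. *)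

theory Defs
  imports "HOL-Analysis.Analysis"
begin

text \<open>Almost periodic: the set of translates is relatively compact in l-infinity(Z).
  l-infinity(Z) is modelled as the space of bounded (automatically continuous,
  Z being discrete) functions with the sup norm, i.e. the type bcontfun type (int to complex).
  Being a subset of l-infinity requires boundedness of a.\<close>
definition almost_periodic :: "(int \<Rightarrow> complex) \<Rightarrow> bool" where
  "almost_periodic a \<longleftrightarrow>
     bounded (range a) \<and>
     compact (closure (range (\<lambda>m::int. Bcontfun (\<lambda>n. a (n + m)))))"

definition repetition_property :: "(nat \<Rightarrow> 'a::metric_space) \<Rightarrow> bool" where
  "repetition_property w \<longleftrightarrow>
     (\<forall>\<epsilon>>0. \<forall>r::nat. r \<ge> 1 \<longrightarrow>
        (\<exists>q::nat. q \<ge> 1 \<and> (\<forall>n\<le>r * q. dist (w n) (w (n + q)) < \<epsilon>)))"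

text \<open>For a two-element family, finite subfamilies are the singletons
  (covered by the individual repetition property) and the pair itself.\<close>
definition joint_repetition_property2 ::
  "(nat \<Rightarrow> 'a::metric_space) \<Rightarrow> (nat \<Rightarrow> 'b::metric_space) \<Rightarrow> bool" where
  "joint_repetition_property2 u v \<longleftrightarrow>
     repetition_property u \<and> repetition_property v \<and>
     (\<forall>\<epsilon>>0. \<forall>r::nat. r \<ge> 1 \<longrightarrow>
        (\<exists>q::nat. q \<ge> 1 \<and>
           (\<forall>n\<le>r * q. dist (u n) (u (n + q)) < \<epsilon> \<and> dist (v n) (v (n + q)) < \<epsilon>)))"

end

theory Submission
  imports Defs
begin

(* Let a be almost periodic and w have the repetition property.
   (1) Pigeonhole in a compact set: for every \<epsilon> > 0 there is K such that any
       sequence in the compact closure of the translates of a has two terms with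
       indices i < j \<le> K at distance < \<epsilon>.  Applied to the translates by
       0, q, 2q, ..., this shows: for every q some multiple k*q with
       1 \<le> k \<le> K is an \<epsilon>-almost period of a on all of \<int> (bounded return).
   (2) Chaining: if q is a \<delta>-repetition period of w on a long enough range,
       then each multiple k*q is a (k*\<delta>)-repetition period on a shorter range.
       Choosing \<delta> = \<epsilon>/(K+1) makes all multiples k*q, k \<le> K, good for w.
   The theorem follows: take q from (2), then the multiple k*q from (1);
   Q = k*q works for both sequences simultaneously. *)

lemma compact_pigeonhole:
  fixes S :: "'a::metric_space set"
  assumes "compact S" "\<epsilon> > 0"
  obtains K :: nat where
    "\<And>f. (\<And>i. f i \<in> S) \<Longrightarrow> \<exists>i j. i < j \<and> j \<le> K \<and> dist (f i) (f j) < \<epsilon>"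
proof -
  obtain C where C: "finite C" "S \<subseteq> (\<Union>c\<in>C. ball c (\<epsilon>/2))"
    using seq_compact_imp_totally_bounded[of S] compact_imp_seq_compact[OF assms(1)] assms(2)
    by (meson half_gt_zero)
  have "\<exists>i j. i < j \<and> j \<le> card C \<and> dist (f i) (f j) < \<epsilon>" if f: "\<And>i. f i \<in> S" for f
  proof -
    have "\<forall>i. \<exists>c\<in>C. f i \<in> ball c (\<epsilon>/2)" using f C(2) by blast
    then obtain c where c: "\<And>i. c i \<in> C" "\<And>i. f i \<in> ball (c i) (\<epsilon>/2)" by metis
    have "\<not> inj_on c {0..card C}"
    proof
      assume "inj_on c {0..card C}"
      then have "card {0..card C} \<le> card C"
        using card_inj_on_le[of c "{0..card C}" C] C(1) c(1) by blast
      then show False by simp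
    qed
    then obtain i j where ij: "i \<le> card C" "j \<le> card C" "i \<noteq> j" "c i = c j"
      unfolding inj_on_def by auto
    have close: "dist (f i) (f j) < \<epsilon>"
      using dist_triangle_half_r[of "c i" "f i" \<epsilon> "f j"] c(2)[of i] c(2)[of j] ij(4) by simp
    show ?thesis
    proof (cases "i < j")
      case True then show ?thesis using ij close by blast
    next
      case False then show ?thesis using ij close by (metis dist_commute linorder_neqE_nat)
    qed
  qed
  then show ?thesis using that by blast
qed

definition translate :: "(int \<Rightarrow> complex) \<Rightarrow> int \<Rightarrow> (int \<Rightarrow>\<^sub>C complex)" where
  "translate a m = Bcontfun (\<lambda>n. a (n + m))"

lemma apply_translate:
  assumes "bounded (range a)"
  shows "apply_bcontfun (translate a m) = (\<lambda>n. a (n + m))"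
proof -
  have "range (\<lambda>n. a (n + m)) \<subseteq> range a" by auto
  then have "(\<lambda>n. a (n + m)) \<in> bcontfun"
    using assms bounded_subset unfolding bcontfun_def by auto
  then show ?thesis unfolding translate_def by (simp add: Bcontfun_inverse)
qed

lemma dist_translate_pointwise:
  assumes "bounded (range a)" "dist (translate a m) (translate a m') < \<epsilon>"
  shows "dist (a (n + m)) (a (n + m')) < \<epsilon>"
  using dist_bounded[of "translate a m" n "translate a m'"] assms
  by (simp add: apply_translate)

lemma almost_periodic_bounded_return:
  assumes "almost_periodic a" "\<epsilon> > 0"
  obtains K :: nat where
    "\<And>q::nat. \<exists>k. 1 \<le> k \<and> k \<le> K \<and> (\<forall>n. dist (a n) (a (n + int (k * q))) < \<epsilon>)"
proof -
  have bd: "bounded (range a)" and cpt: "compact (closure (range (translate a)))"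
    using assms(1) unfolding almost_periodic_def translate_def by auto
  obtain K :: nat where K: "\<And>f. (\<And>i. f i \<in> closure (range (translate a))) \<Longrightarrow>
      \<exists>i j. i < j \<and> j \<le> K \<and> dist (f i) (f j) < \<epsilon>"
    using compact_pigeonhole[OF cpt assms(2)] by blast
  have "\<exists>k. 1 \<le> k \<and> k \<le> K \<and> (\<forall>n. dist (a n) (a (n + int (k * q))) < \<epsilon>)" for q :: nat
  proof -
    obtain i j where ij: "i < j" "j \<le> K"
      and close: "dist (translate a (int (i * q))) (translate a (int (j * q))) < \<epsilon>"
      using K[of "\<lambda>i. translate a (int (i * q))"] closure_subset[of "range (translate a)"]
      by (meson rangeI subsetD)
    have "dist (a n) (a (n + int ((j - i) * q))) < \<epsilon>" for n
    proof -
      have shift: "n - int (i * q) + int (j * q) = n + int ((j - i) * q)"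
        using ij(1) by (simp add: diff_mult_distrib)
      show ?thesis
        using dist_translate_pointwise[OF bd close, of "n - int (i * q)"] by (simp only: shift diff_add_cancel)
    qed
    then show ?thesis using ij by (intro exI[of _ "j - i"]) auto
  qed
  then show ?thesis using that by blast
qed

lemma repetition_chain:
  fixes w :: "nat \<Rightarrow> 'b::metric_space"
  assumes step: "\<And>n. n \<le> N \<Longrightarrow> dist (w n) (w (n + q)) < \<delta>"
    and range: "n + k * q \<le> N + q"
  shows "dist (w n) (w (n + k * q)) \<le> real k * \<delta>"
  using range
proof (induction k)
  case 0 then show ?case by simp
next
  case (Suc k)
  have "dist (w n) (w (n + Suc k * q))
      \<le> dist (w n) (w (n + k * q)) + dist (w (n + k * q)) (w (n + k * q + q))"
    by (metis add.assoc add.commute dist_triangle mult_Suc)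
  also have "\<dots> \<le> real k * \<delta> + \<delta>"
    using Suc step[of "n + k * q"] by (intro add_mono) auto
  finally show ?case by (simp add: algebra_simps)
qed

lemma repetition_property_multiples:
  fixes w :: "nat \<Rightarrow> 'b::metric_space"
  assumes "repetition_property w" "\<epsilon> > 0"
  shows "\<exists>q\<ge>1. \<forall>k\<le>K. \<forall>n\<le>r * (k * q). dist (w n) (w (n + k * q)) < \<epsilon>"
proof -
  define \<delta> where "\<delta> = \<epsilon> / (real K + 1)"
  have \<delta>: "\<delta> > 0" "real K * \<delta> < \<epsilon>"
    using assms(2) by (simp_all add: \<delta>_def field_simps)
  obtain q where q: "q \<ge> 1" "\<forall>n\<le>(r * K + K + 1) * q. dist (w n) (w (n + q)) < \<delta>"
    using assms(1) \<delta>(1) unfolding repetition_property_def by (metis le_add2)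
  have "dist (w n) (w (n + k * q)) < \<epsilon>" if k: "k \<le> K" and n: "n \<le> r * (k * q)" for k n
  proof -
    have "r * (k * q) \<le> r * (K * q)" "k * q \<le> K * q"
      using k by (simp_all add: mult_le_mono)
    moreover have "(r * K + K + 1) * q + q = r * (K * q) + K * q + q + q"
      by (simp add: algebra_simps)
    ultimately have "n + k * q \<le> (r * K + K + 1) * q + q"
      using n by linarith
    then have "dist (w n) (w (n + k * q)) \<le> real k * \<delta>"
      using q(2) by (intro repetition_chain) auto
    also have "\<dots> \<le> real K * \<delta>" using k \<delta>(1) by (simp add: mult_right_mono)
    finally show ?thesis using \<delta>(2) by simp
  qed
  then show ?thesis using q(1) by blast
qed

theorem theoremA1:
  fixes a :: "int \<Rightarrow> complex" and w :: "nat \<Rightarrow> 'b::metric_space"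
  assumes "almost_periodic a"
    and "repetition_property w"
  shows "joint_repetition_property2 (\<lambda>n. a (int n)) w"
proof -
  have joint: "\<exists>Q\<ge>1. \<forall>n\<le>r * Q.
      dist (a (int n)) (a (int (n + Q))) < \<epsilon> \<and> dist (w n) (w (n + Q)) < \<epsilon>"
    if "\<epsilon> > 0" for \<epsilon> :: real and r :: nat
  proof -
    obtain K where K: "\<And>q::nat. \<exists>k. 1 \<le> k \<and> k \<le> K \<and>
        (\<forall>n. dist (a n) (a (n + int (k * q))) < \<epsilon>)"
      using almost_periodic_bounded_return[OF assms(1) \<open>\<epsilon> > 0\<close>] by blast
    obtain q where q: "q \<ge> 1" "\<forall>k\<le>K. \<forall>n\<le>r * (k * q). dist (w n) (w (n + k * q)) < \<epsilon>"
      using repetition_property_multiples[OF assms(2) \<open>\<epsilon> > 0\<close>] by blast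
    obtain k where k: "1 \<le> k" "k \<le> K" "\<forall>n. dist (a n) (a (n + int (k * q))) < \<epsilon>"
      using K by blast
    show ?thesis
      using k q by (intro exI[of _ "k * q"]) auto
  qed
  then have "repetition_property (\<lambda>n. a (int n))"
    unfolding repetition_property_def by blast
  with assms(2) joint show ?thesis
    unfolding joint_repetition_property2_def by blast
qed

end
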